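(* There is no SLCS formula $\varphi$ such that for every neighbourhood model $\mathcal M$ with underlying space $(X,\mathcal N)$: $(X,\mathcal N)$ is connected if and only if $\mathcal M,x\models\varphi$ for every $x\in X$. (For any neighbourhood model $\mathcal M$, the model $\mathcal M'$ consisting of two disjoint, mutually unconnected copies of $\mathcal M$ admits a path preserving bisimulation with $\mathcal M$ relating each point of $\mathcal M$ to both of its copies.)
   Context: A neighbourhood space $(X,\mathcal N)$ assigns to each $x\in X$ a filter $\mathcal N(x)$ on $X$ (closed under finite intersections and supersets, not containing $\emptyset$) such that $x\in N$ for all $N\in\mathcal N(x)$. Closure: $\mathcal C(A)=\{x\mid\forall N\in\mathcal N(x): A\cap N\neq\emptyset\}$. Subsets $U,V$ are semi-separated if $\mathcal C(U)\cap V=U\cap\mathcal C(V)=\emptyset$; a set is connected if it is not the union of two non-empty semi-separated sets; the space is connected if $X$ is. Continuity: $f$ continuous iff $f^{-1}[N]\in\mathcal N_1(x)$ for all $N\in\mathcal N_2(f(x))$. An index space $(I,\mathcal N_I,\le,0)$ is a connected neighbourhood space with a linear order with least element $0$. A neighbourhood model $\mathcal M=((X,\mathcal N),\mathcal I,V)$ has an index space $\mathcal I$ and a valuation $V:X\to\mathcal P(\mathsf P)$ for a fixed countable set $\mathsf P$ of atoms; a path is a continuous $p:I\to X$. SLCS formulas: $\varphi::=a\mid\top\mid\neg\varphi\mid\varphi\wedge\varphi\mid\mathcal N\varphi\mid\varphi\,\mathcal R\,\varphi\mid\varphi\,\mathcal P\,\varphi$ with $a\in\mathsf P$. Semantics: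 $\mathcal M,x\models a$ iff $a\in V(x)$; Booleans as usual; $\mathcal M,x\models\mathcal N\varphi$ iff $x\in\mathcal C(\{y\mid\mathcal M,y\models\varphi\})$; $\mathcal M,x\models\varphi\,\mathcal R\,\psi$ iff there are a path $p$ and $n$ with $p(n)=x$, $\mathcal M,p(0)\models\psi$ and $\mathcal M,p(i)\models\varphi$ for all $0<i\le n$; $\mathcal M,x\models\varphi\,\mathcal P\,\psi$ iff there are a path $p$ with $p(0)=x$ and $n$ with $\mathcal M,p(n)\models\psi$ and $\mathcal M,p(i)\models\varphi$ for all $0\le i<n$. Path preserving bisimulation: for models $\mathcal M_1,\mathcal M_2$ over the same index space with path sets $\mathcal P_1,\mathcal P_2$, a triple $(Z_{\mathcal N},Z_1,Z_2)$, $\emptyset\ne Z_{\mathcal N}\subseteq X_1\times X_2$, $Z_1\subseteq(\mathcal P_1\times I)\times(\mathcal P_2\times I)$, $Z_2\subseteq(\mathcal P_2\times I)\times(\mathcal P_1\times I)$, such that: (1) at each pair $x_1Z_{\mathcal N}x_2$: $V_1(x_1)=V_2(x_2)$; for every $N_2\in\mathcal N_2(x_2)$ there is $N_1\in\mathcal N_1(x_1)$ with every $y_1\in N_1$ related to some $y_2\in N_2$; and symmetrically for every $N_1\in\mathcal N_1(x_1)$; (2) if $x_1Z_{\mathcal N}x_2$, $p(0)=x_1$, $n\ne0$, there are $q$ with $q(0)=x_2$ and $m$ with $p(n)Z_{\mathcal N}q(m)$, $(p,n)Z_1(q,m)$; (3) if $x_1Z_{\mathcal N}x_2$, $p(n)=x_1$,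 $n\ne0$, there are $q,m$ with $q(m)=x_2$, $p(0)Z_{\mathcal N}q(0)$, $(p,n)Z_1(q,m)$; (4) if $(p,n)Z_1(q,m)$ and $0<k_q<m$, there is $0<k_p<n$ with $p(k_p)Z_{\mathcal N}q(k_q)$; (5) if $x_1Z_{\mathcal N}x_2$, $q(0)=x_2$, $m\ne0$, there are $p$ with $p(0)=x_1$ and $n$ with $p(n)Z_{\mathcal N}q(m)$, $(q,m)Z_2(p,n)$; (6) if $x_1Z_{\mathcal N}x_2$, $q(m)=x_2$, $m\neq0$, there are $p,n$ with $p(n)=x_1$, $p(0)Z_{\mathcal N}q(0)$, $(q,m)Z_2(p,n)$; (7) if $(q,m)Z_2(p,n)$ and $0<k_p<n$, there is $0<k_q<m$ with $p(k_p)Z_{\mathcal N}q(k_q)$. *)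

theory Defs
  imports Main "HOL-Library.Countable"
begin

definition nspace :: "'a set \<Rightarrow> ('a \<Rightarrow> 'a set set) \<Rightarrow> bool" where
  "nspace X N \<longleftrightarrow>
     (\<forall>x\<in>X. X \<in> N x
        \<and> {} \<notin> N x
        \<and> (\<forall>A\<in>N x. A \<subseteq> X \<and> x \<in> A)
        \<and> (\<forall>A\<in>N x. \<forall>B\<in>N x. A \<inter> B \<in> N x)
        \<and> (\<forall>A\<in>N x. \<forall>B. A \<subseteq> B \<and> B \<subseteq> X \<longrightarrow> B \<in> N x))"

definition nclosure :: "'a set \<Rightarrow> ('a \<Rightarrow> 'a set set) \<Rightarrow> 'a set \<Rightarrow> 'a set" where
  "nclosure X N A = {x \<in> X. \<forall>M\<in>N x. A \<inter> M \<noteq> {}}"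

definition semi_separated :: "'a set \<Rightarrow> ('a \<Rightarrow> 'a set set) \<Rightarrow> 'a set \<Rightarrow> 'a set \<Rightarrow> bool" where
  "semi_separated X N U V \<longleftrightarrow> nclosure X N U \<inter> V = {} \<and> U \<inter> nclosure X N V = {}"

definition nconnected_set :: "'a set \<Rightarrow> ('a \<Rightarrow> 'a set set) \<Rightarrow> 'a set \<Rightarrow> bool" where
  "nconnected_set X N S \<longleftrightarrow>
     \<not> (\<exists>U V. U \<noteq> {} \<and> V \<noteq> {} \<and> U \<union> V = S \<and> semi_separated X N U V)"

definition nconnected :: "'a set \<Rightarrow> ('a \<Rightarrow> 'a set set) \<Rightarrow> bool" where
  "nconnected X N \<longleftrightarrow> nconnected_set X N X"

definition ncontinuous ::
  "'a set \<Rightarrow> ('a \<Rightarrow> 'a set set) \<Rightarrow> 'b set \<Rightarrow> ('b \<Rightarrow> 'b set set) \<Rightarrow> ('a \<Rightarrow> 'b) \<Rightarrow> bool" where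
  "ncontinuous X1 N1 X2 N2 f \<longleftrightarrow>
     (\<forall>x\<in>X1. f x \<in> X2) \<and>
     (\<forall>x\<in>X1. \<forall>M\<in>N2 (f x). {y \<in> X1. f y \<in> M} \<in> N1 x)"

record 'i ispace =
  ipts :: "'i set"
  inbhd :: "'i \<Rightarrow> 'i set set"
  ile :: "'i \<Rightarrow> 'i \<Rightarrow> bool"
  izero :: 'i

definition index_space :: "'i ispace \<Rightarrow> bool" where
  "index_space \<I> \<longleftrightarrow>
     nspace (ipts \<I>) (inbhd \<I>) \<and> nconnected (ipts \<I>) (inbhd \<I>) \<and>
     (\<forall>i\<in>ipts \<I>. ile \<I> i i) \<and>
     (\<forall>i\<in>ipts \<I>. \<forall>j\<in>ipts \<I>. ile \<I> i j \<and> ile \<I> j i \<longrightarrow> i = j) \<and>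
     (\<forall>i\<in>ipts \<I>. \<forall>j\<in>ipts \<I>. \<forall>k\<in>ipts \<I>. ile \<I> i j \<and> ile \<I> j k \<longrightarrow> ile \<I> i k) \<and>
     (\<forall>i\<in>ipts \<I>. \<forall>j\<in>ipts \<I>. ile \<I> i j \<or> ile \<I> j i) \<and>
     izero \<I> \<in> ipts \<I> \<and> (\<forall>i\<in>ipts \<I>. ile \<I> (izero \<I>) i)"

definition ilt :: "'i ispace \<Rightarrow> 'i \<Rightarrow> 'i \<Rightarrow> bool" where
  "ilt \<I> i j \<longleftrightarrow> ile \<I> i j \<and> i \<noteq> j"

record ('a, 'i, 'p) nmodel =
  pts :: "'a set"
  nbhd :: "'a \<Rightarrow> 'a set set"
  idx :: "'i ispace"
  val :: "'a \<Rightarrow> 'p set"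

definition nmodel :: "('a, 'i, 'p) nmodel \<Rightarrow> bool" where
  "nmodel M \<longleftrightarrow> nspace (pts M) (nbhd M) \<and> index_space (idx M)"

definition is_path :: "('a, 'i, 'p) nmodel \<Rightarrow> ('i \<Rightarrow> 'a) \<Rightarrow> bool" where
  "is_path M p \<longleftrightarrow> ncontinuous (ipts (idx M)) (inbhd (idx M)) (pts M) (nbhd M) p"

datatype 'p slcs =
    Atom 'p
  | Top
  | Neg "'p slcs"
  | Conj "'p slcs" "'p slcs"
  | Near "'p slcs"
  | Reach "'p slcs" "'p slcs"
  | Pass "'p slcs" "'p slcs"

primrec sat :: "('a, 'i, 'p) nmodel \<Rightarrow> 'a \<Rightarrow> 'p slcs \<Rightarrow> bool" where
  "sat M x (Atom a) \<longleftrightarrow> a \<in> val M x"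
| "sat M x Top \<longleftrightarrow> True"
| "sat M x (Neg \<phi>) \<longleftrightarrow> \<not> sat M x \<phi>"
| "sat M x (Conj \<phi> \<psi>) \<longleftrightarrow> sat M x \<phi> \<and> sat M x \<psi>"
| "sat M x (Near \<phi>) \<longleftrightarrow> x \<in> nclosure (pts M) (nbhd M) {y \<in> pts M. sat M y \<phi>}"
| "sat M x (Reach \<phi> \<psi>) \<longleftrightarrow>
     (\<exists>p n. is_path M p \<and> n \<in> ipts (idx M) \<and> p n = x \<and>
        sat M (p (izero (idx M))) \<psi> \<and>
        (\<forall>i\<in>ipts (idx M). ilt (idx M) (izero (idx M)) i \<and> ile (idx M) i n \<longrightarrow> sat M (p i) \<phi>))"
| "sat M x (Pass \<phi> \<psi>) \<longleftrightarrow>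
     (\<exists>p n. is_path M p \<and> n \<in> ipts (idx M) \<and> p (izero (idx M)) = x \<and>
        sat M (p n) \<psi> \<and>
        (\<forall>i\<in>ipts (idx M). ile (idx M) (izero (idx M)) i \<and> ilt (idx M) i n \<longrightarrow> sat M (p i) \<phi>))"

definition pp_bisim ::
  "('a, 'i, 'p) nmodel \<Rightarrow> ('b, 'i, 'p) nmodel \<Rightarrow> ('a \<times> 'b) set
   \<Rightarrow> ((('i \<Rightarrow> 'a) \<times> 'i) \<times> (('i \<Rightarrow> 'b) \<times> 'i)) set
   \<Rightarrow> ((('i \<Rightarrow> 'b) \<times> 'i) \<times> (('i \<Rightarrow> 'a) \<times> 'i)) set \<Rightarrow> bool" where
  "pp_bisim M1 M2 ZN Z1 Z2 \<longleftrightarrow>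
    (let I = ipts (idx M1); z = izero (idx M1); lt = ilt (idx M1) in
     idx M1 = idx M2 \<and>
     ZN \<noteq> {} \<and> ZN \<subseteq> pts M1 \<times> pts M2 \<and>
     Z1 \<subseteq> ({p. is_path M1 p} \<times> I) \<times> ({q. is_path M2 q} \<times> I) \<and>
     Z2 \<subseteq> ({q. is_path M2 q} \<times> I) \<times> ({p. is_path M1 p} \<times> I) \<and>
     \<comment> \<open>(1)\<close>
     (\<forall>(x1, x2)\<in>ZN. val M1 x1 = val M2 x2 \<and>
        (\<forall>N2\<in>nbhd M2 x2. \<exists>N1\<in>nbhd M1 x1. \<forall>y1\<in>N1. \<exists>y2\<in>N2. (y1, y2) \<in> ZN) \<and>
        (\<forall>N1\<in>nbhd M1 x1. \<exists>N2\<in>nbhd M2 x2. \<forall>y2\<in>N2. \<exists>y1\<in>N1. (y1, y2) \<in> ZN)) \<and>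
     \<comment> \<open>(2)\<close>
     (\<forall>(x1, x2)\<in>ZN. \<forall>p n. is_path M1 p \<and> n \<in> I \<and> p z = x1 \<and> n \<noteq> z \<longrightarrow>
        (\<exists>q m. is_path M2 q \<and> m \<in> I \<and> q z = x2 \<and> (p n, q m) \<in> ZN \<and> ((p, n), (q, m)) \<in> Z1)) \<and>
     \<comment> \<open>(3)\<close>
     (\<forall>(x1, x2)\<in>ZN. \<forall>p n. is_path M1 p \<and> n \<in> I \<and> p n = x1 \<and> n \<noteq> z \<longrightarrow>
        (\<exists>q m. is_path M2 q \<and> m \<in> I \<and> q m = x2 \<and> (p z, q z) \<in> ZN \<and> ((p, n), (q, m)) \<in> Z1)) \<and>
     \<comment> \<open>(4)\<close>
     (\<forall>((p, n), (q, m))\<in>Z1. \<forall>kq\<in>I. lt z kq \<and> lt kq m \<longrightarrow>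
        (\<exists>kp\<in>I. lt z kp \<and> lt kp n \<and> (p kp, q kq) \<in> ZN)) \<and>
     \<comment> \<open>(5)\<close>
     (\<forall>(x1, x2)\<in>ZN. \<forall>q m. is_path M2 q \<and> m \<in> I \<and> q z = x2 \<and> m \<noteq> z \<longrightarrow>
        (\<exists>p n. is_path M1 p \<and> n \<in> I \<and> p z = x1 \<and> (p n, q m) \<in> ZN \<and> ((q, m), (p, n)) \<in> Z2)) \<and>
     \<comment> \<open>(6)\<close>
     (\<forall>(x1, x2)\<in>ZN. \<forall>q m. is_path M2 q \<and> m \<in> I \<and> q m = x2 \<and> m \<noteq> z \<longrightarrow>
        (\<exists>p n. is_path M1 p \<and> n \<in> I \<and> p n = x1 \<and> (p z, q z) \<in> ZN \<and> ((q, m), (p, n)) \<in> Z2)) \<and>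
     \<comment> \<open>(7)\<close>
     (\<forall>((q, m), (p, n))\<in>Z2. \<forall>kp\<in>I. lt z kp \<and> lt kp n \<longrightarrow>
        (\<exists>kq\<in>I. lt z kq \<and> lt kq m \<and> (p kp, q kq) \<in> ZN)))"

definition two_copies :: "('a, 'i, 'p) nmodel \<Rightarrow> ('a \<times> bool, 'i, 'p) nmodel" where
  "two_copies M =
    \<lparr> pts = pts M \<times> UNIV,
      nbhd = (\<lambda>(x, b). {A. A \<subseteq> pts M \<times> UNIV \<and> (\<exists>N\<in>nbhd M x. N \<times> {b} \<subseteq> A)}),
      idx = idx M,
      val = (\<lambda>(x, b). val M x) \<rparr>"

end

theory Submission
  imports Defs
begin

text \<open>Connectedness is not SLCS-definable: over the one-point index space every path is constant,
  and in a discrete space closure is the identity, so in a discrete model with empty valuation the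
  truth value of a formula depends neither on the point nor on the carrier. Yet the one-point
  discrete space is connected and a two-point one is not.

  For the bisimulation, the projection from two copies of a model onto the model carries
  neighbourhoods onto neighbourhoods, preserves the valuation and paths, and lifts every path into
  either copy; any such path-lifting map relates each point to its preimages by a path preserving
  bisimulation.\<close>

lemma
  assumes "nspace X N" and "x \<in> X"
  shows nspace_carrier_nbhd: "X \<in> N x"
    and nspace_nbhd_subset: "A \<in> N x \<Longrightarrow> A \<subseteq> X"
    and nspace_nbhd_mem: "A \<in> N x \<Longrightarrow> x \<in> A"
    and nspace_nbhd_Int: "A \<in> N x \<Longrightarrow> B \<in> N x \<Longrightarrow> A \<inter> B \<in> N x"
    and nspace_nbhd_mono: "A \<in> N x \<Longrightarrow> A \<subseteq> B \<Longrightarrow> B \<subseteq> X \<Longrightarrow> B \<in> N x"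
  using assms unfolding nspace_def by blast+

lemma nspaceI:
  assumes "\<And>x. x \<in> X \<Longrightarrow> X \<in> N x"
    and "\<And>x. x \<in> X \<Longrightarrow> {} \<notin> N x"
    and "\<And>x A. x \<in> X \<Longrightarrow> A \<in> N x \<Longrightarrow> A \<subseteq> X"
    and "\<And>x A. x \<in> X \<Longrightarrow> A \<in> N x \<Longrightarrow> x \<in> A"
    and "\<And>x A B. x \<in> X \<Longrightarrow> A \<in> N x \<Longrightarrow> B \<in> N x \<Longrightarrow> A \<inter> B \<in> N x"
    and "\<And>x A B. x \<in> X \<Longrightarrow> A \<in> N x \<Longrightarrow> A \<subseteq> B \<Longrightarrow> B \<subseteq> X \<Longrightarrow> B \<in> N x"
  shows "nspace X N"
  unfolding nspace_def
  by (intro ballI conjI allI impI; (elim conjE)?; (rule assms; assumption))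

lemma nclosure_subset: "nspace X N \<Longrightarrow> U \<subseteq> X \<Longrightarrow> U \<subseteq> nclosure X N U"
  unfolding nclosure_def by (blast dest: nspace_nbhd_mem)

lemma nmodel_nspace: "nmodel M \<Longrightarrow> nspace (pts M) (nbhd M)"
  and nmodel_index_nspace: "nmodel M \<Longrightarrow> nspace (ipts (idx M)) (inbhd (idx M))"
  and nmodel_izero: "nmodel M \<Longrightarrow> izero (idx M) \<in> ipts (idx M)"
  unfolding nmodel_def index_space_def by blast+

lemma path_in_pts: "is_path M p \<Longrightarrow> i \<in> ipts (idx M) \<Longrightarrow> p i \<in> pts M"
  unfolding is_path_def ncontinuous_def by blast

section \<open>Bisimulations induced by path-lifting maps\<close>

lemma pp_bisim_path_lifting_map:
  fixes f :: "'b \<Rightarrow> 'a"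
  assumes M1: "nmodel M1" and M2: "nmodel M2"
    and idx: "idx M2 = idx M1" and nonempty: "pts M2 \<noteq> {}"
    and f_pts: "\<And>y. y \<in> pts M2 \<Longrightarrow> f y \<in> pts M1"
    and val: "\<And>y. y \<in> pts M2 \<Longrightarrow> val M2 y = val M1 (f y)"
    and nbhd_forth: "\<And>y N2. y \<in> pts M2 \<Longrightarrow> N2 \<in> nbhd M2 y \<Longrightarrow> \<exists>N1\<in>nbhd M1 (f y). N1 \<subseteq> f ` N2"
    and nbhd_back: "\<And>y N1. y \<in> pts M2 \<Longrightarrow> N1 \<in> nbhd M1 (f y) \<Longrightarrow> \<exists>N2\<in>nbhd M2 y. f ` N2 \<subseteq> N1"
    and path_map: "\<And>q. is_path M2 q \<Longrightarrow> is_path M1 (f \<circ> q)"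
    and path_lift: "\<And>p i y. is_path M1 p \<Longrightarrow> i \<in> ipts (idx M1) \<Longrightarrow> y \<in> pts M2 \<Longrightarrow> f y = p i
       \<Longrightarrow> \<exists>q. is_path M2 q \<and> f \<circ> q = p \<and> q i = y"
  shows "pp_bisim M1 M2 {(f y, y) | y. y \<in> pts M2}
     {((f \<circ> q, n), (q, n)) | q n. is_path M2 q \<and> n \<in> ipts (idx M1)}
     {((q, n), (f \<circ> q, n)) | q n. is_path M2 q \<and> n \<in> ipts (idx M1)}"
  (is "pp_bisim M1 M2 ?ZN ?Z1 ?Z2")
proof -
  let ?I = "ipts (idx M1)" and ?z = "izero (idx M1)"
  have z: "?z \<in> ?I"
    using nmodel_izero[OF M1] .
  have ZN_iff: "(x, y) \<in> ?ZN \<longleftrightarrow> y \<in> pts M2 \<and> x = f y" for x y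
    by blast
  have path_pts: "q j \<in> pts M2" if "is_path M2 q" "j \<in> ?I" for q j
    using path_in_pts[OF that(1)] that(2) idx by simp
  have ZN_nbhd_forth: "\<exists>N1\<in>nbhd M1 (f y). \<forall>y1\<in>N1. \<exists>y2\<in>N2. (y1, y2) \<in> ?ZN"
    if y: "y \<in> pts M2" and N2: "N2 \<in> nbhd M2 y" for y N2
  proof -
    obtain N1 where "N1 \<in> nbhd M1 (f y)" "N1 \<subseteq> f ` N2"
      using nbhd_forth[OF y N2] by blast
    moreover have "N2 \<subseteq> pts M2"
      using nspace_nbhd_subset[OF nmodel_nspace[OF M2] y N2] .
    ultimately show ?thesis
      unfolding ZN_iff by blast
  qed
  have ZN_nbhd_back: "\<exists>N2\<in>nbhd M2 y. \<forall>y2\<in>N2. \<exists>y1\<in>N1. (y1, y2) \<in> ?ZN"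
    if y: "y \<in> pts M2" and N1: "N1 \<in> nbhd M1 (f y)" for y N1
  proof -
    obtain N2 where "N2 \<in> nbhd M2 y" "f ` N2 \<subseteq> N1"
      using nbhd_back[OF y N1] by blast
    moreover from this have "N2 \<subseteq> pts M2"
      by (intro nspace_nbhd_subset[OF nmodel_nspace[OF M2] y])
    ultimately show ?thesis
      unfolding ZN_iff by blast
  qed
  have lift: "\<exists>q. is_path M2 q \<and> q i = y \<and> (\<forall>j\<in>?I. (p j, q j) \<in> ?ZN) \<and>
      (\<forall>m\<in>?I. ((p, m), (q, m)) \<in> ?Z1)"
    if lift_hyps: "is_path M1 p" "i \<in> ?I" "y \<in> pts M2" "f y = p i" for p i y
  proof -
    obtain q where q: "is_path M2 q" "f \<circ> q = p" "q i = y"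
      using path_lift[OF lift_hyps] by blast
    have "(p j, q j) \<in> ?ZN" if "j \<in> ?I" for j
      using path_pts[OF q(1) that] q(2) by auto
    with q show ?thesis
      by blast
  qed
  have proj: "is_path M1 (f \<circ> q) \<and> (\<forall>j\<in>?I. ((f \<circ> q) j, q j) \<in> ?ZN) \<and>
      (\<forall>m\<in>?I. ((q, m), (f \<circ> q, m)) \<in> ?Z2)"
    if "is_path M2 q" for q
    using path_map[OF that] path_pts[OF that] that by auto
  show ?thesis
    \<comment> \<open>The side conditions, then clauses (1)--(7). Every witness path is the lift or the
      projection of the given one, taken at the same index.\<close>
    unfolding pp_bisim_def Let_def idx
    apply (intro conjI)
    subgoal by (rule refl)
    subgoal using nonempty by blast
    subgoal using f_pts by blast
    subgoal using path_map by auto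
    subgoal using path_map by auto
    subgoal using val ZN_nbhd_forth ZN_nbhd_back by auto
    subgoal using lift z by fastforce
    subgoal using lift z by fastforce
    subgoal using path_pts by (auto simp: ZN_iff)
    subgoal using proj z by fastforce
    subgoal using proj z by fastforce
    subgoal using path_pts by (auto simp: ZN_iff)
    done
qed

lemma two_copies_simps [simp]:
  "pts (two_copies M) = pts M \<times> UNIV"
  "nbhd (two_copies M) (x, b) = {A. A \<subseteq> pts M \<times> UNIV \<and> (\<exists>N\<in>nbhd M x. N \<times> {b} \<subseteq> A)}"
  "idx (two_copies M) = idx M"
  "val (two_copies M) (x, b) = val M x"
  by (simp_all add: two_copies_def)

lemma nspace_two_copies:
  assumes "nspace X N"
  shows "nspace (X \<times> (UNIV::bool set)) (\<lambda>(x, b). {A. A \<subseteq> X \<times> UNIV \<and> (\<exists>N'\<in>N x. N' \<times> {b} \<subseteq> A)})"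
proof (rule nspaceI; clarify)
  fix A and x :: 'a and b :: bool assume "A \<subseteq> X \<times> UNIV" "(x, b) \<in> A"
  then show "x \<in> X \<and> b \<in> UNIV"
    by blast
next
  fix x and b :: bool assume "x \<in> X"
  then show "X \<times> UNIV \<subseteq> X \<times> UNIV \<and> (\<exists>N'\<in>N x. N' \<times> {b} \<subseteq> X \<times> UNIV)"
    using nspace_carrier_nbhd[OF assms] by blast
next
  fix x and b :: bool and N' assume "x \<in> X" "N' \<in> N x" "N' \<times> {b} \<subseteq> {}"
  then show False
    using nspace_nbhd_mem[OF assms] by blast
next
  fix x and b :: bool and A N' assume "x \<in> X" "N' \<in> N x" "N' \<times> {b} \<subseteq> A"
  then show "(x, b) \<in> A"
    using nspace_nbhd_mem[OF assms] by blast
next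
  fix x and b :: bool and A B NA NB
  assume "x \<in> X" "A \<subseteq> X \<times> UNIV" "NA \<in> N x" "NA \<times> {b} \<subseteq> A"
    "NB \<in> N x" "NB \<times> {b} \<subseteq> B"
  moreover from this have "NA \<inter> NB \<in> N x"
    by (intro nspace_nbhd_Int[OF assms])
  moreover from calculation have "(NA \<inter> NB) \<times> {b} \<subseteq> A \<inter> B"
    by auto
  ultimately show "A \<inter> B \<subseteq> X \<times> UNIV \<and> (\<exists>N'\<in>N x. N' \<times> {b} \<subseteq> A \<inter> B)"
    by blast
next
  fix x and b :: bool and A B N' assume "A \<subseteq> B" "N' \<in> N x" "N' \<times> {b} \<subseteq> A"
  then show "\<exists>N'\<in>N x. N' \<times> {b} \<subseteq> B"
    by blast
qed

lemma nmodel_two_copies: "nmodel M \<Longrightarrow> nmodel (two_copies M)"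
  unfolding nmodel_def using nspace_two_copies[of "pts M" "nbhd M"]
  by (simp add: two_copies_def)

lemma is_path_two_copies_Pair:
  assumes "nmodel M" and "is_path M p"
  shows "is_path (two_copies M) (\<lambda>i. (p i, b))"
  unfolding is_path_def ncontinuous_def
proof (intro conjI ballI)
  fix i assume "i \<in> ipts (idx (two_copies M))"
  then show "(p i, b) \<in> pts (two_copies M)"
    using path_in_pts[OF assms(2)] by simp
next
  fix i A assume i: "i \<in> ipts (idx (two_copies M))"
    and "A \<in> nbhd (two_copies M) (p i, b)"
  then obtain N where N: "N \<in> nbhd M (p i)" "N \<times> {b} \<subseteq> A"
    by auto
  have "{j \<in> ipts (idx M). p j \<in> N} \<in> inbhd (idx M) i"
    using assms(2) i N(1) unfolding is_path_def ncontinuous_def by simp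
  with nmodel_index_nspace[OF assms(1)]
  have "{j \<in> ipts (idx M). (p j, b) \<in> A} \<in> inbhd (idx M) i"
    using i N(2) by (auto elim!: nspace_nbhd_mono)
  then show "{j \<in> ipts (idx (two_copies M)). (p j, b) \<in> A} \<in> inbhd (idx (two_copies M)) i"
    by simp
qed

lemma is_path_two_copies_fst:
  assumes "nmodel M" and "is_path (two_copies M) q"
  shows "is_path M (fst \<circ> q)"
  unfolding is_path_def ncontinuous_def
proof (intro conjI ballI)
  fix i assume "i \<in> ipts (idx M)"
  then show "(fst \<circ> q) i \<in> pts M"
    using path_in_pts[OF assms(2)] by fastforce
next
  fix i N assume i: "i \<in> ipts (idx M)" and "N \<in> nbhd M ((fst \<circ> q) i)"
  then have N: "N \<in> nbhd M (fst (q i))"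
    by simp
  have "fst (q i) \<in> pts M"
    using path_in_pts[OF assms(2)] i by fastforce
  with N have "N \<subseteq> pts M"
    by (intro nspace_nbhd_subset[OF nmodel_nspace[OF assms(1)]])
  with N have "N \<times> UNIV \<in> nbhd (two_copies M) (q i)"
    by (cases "q i") auto
  then have "{j \<in> ipts (idx M). q j \<in> N \<times> UNIV} \<in> inbhd (idx M) i"
    using assms(2) i unfolding is_path_def ncontinuous_def by simp
  then show "{j \<in> ipts (idx M). (fst \<circ> q) j \<in> N} \<in> inbhd (idx M) i"
    by (simp add: mem_Times_iff)
qed

lemma two_copies_pp_bisim:
  assumes M: "nmodel M" and nonempty: "pts M \<noteq> {}"
  shows "\<exists>Z1 Z2. pp_bisim M (two_copies M) {(x, (x, b)) | x b. x \<in> pts M} Z1 Z2"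
proof -
  have val: "val (two_copies M) y = val M (fst y)" if "y \<in> pts (two_copies M)" for y
    by (cases y) simp
  have nbhd_forth: "\<exists>N1\<in>nbhd M (fst y). N1 \<subseteq> fst ` N2"
    if "N2 \<in> nbhd (two_copies M) y" for y N2
  proof (cases y)
    case (Pair x b)
    with that obtain N1 where "N1 \<in> nbhd M x" "N1 \<times> {b} \<subseteq> N2"
      by auto
    with Pair show ?thesis
      by (auto intro!: bexI[of _ N1] image_eqI[of _ fst])
  qed
  have nbhd_back: "\<exists>N2\<in>nbhd (two_copies M) y. fst ` N2 \<subseteq> N1"
    if "y \<in> pts (two_copies M)" "N1 \<in> nbhd M (fst y)" for y N1
  proof (cases y)
    case (Pair x b)
    with that have "N1 \<subseteq> pts M"
      using nspace_nbhd_subset[OF nmodel_nspace[OF M]] by auto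
    with that Pair have "N1 \<times> {b} \<in> nbhd (two_copies M) y"
      by auto
    then show ?thesis
      by force
  qed
  have path_lift: "\<exists>q. is_path (two_copies M) q \<and> fst \<circ> q = p \<and> q i = y"
    if "is_path M p" "i \<in> ipts (idx M)" "y \<in> pts (two_copies M)" "fst y = p i" for p i y
    using that is_path_two_copies_Pair[OF M, of p "snd y"]
    by (intro exI[of _ "\<lambda>j. (p j, snd y)"]) (auto simp: prod_eq_iff)
  have "{(x, (x, b)) | x b. x \<in> pts M} = {(fst y, y) | y. y \<in> pts (two_copies M)}"
    by auto
  moreover have "pts (two_copies M) \<noteq> {}"
    using nonempty by simp
  ultimately show ?thesis
    using pp_bisim_path_lifting_map[OF M nmodel_two_copies[OF M] two_copies_simps(3) _ _ val
        nbhd_forth nbhd_back is_path_two_copies_fst[OF M] path_lift]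
    by fastforce
qed

section \<open>Discrete models over a one-point index space\<close>

definition trivial_ispace :: "'i ispace" where
  "trivial_ispace = \<lparr>ipts = {undefined}, inbhd = (\<lambda>_. {{undefined}}), ile = (\<lambda>_ _. True),
     izero = undefined\<rparr>"

definition discrete_model :: "'a set \<Rightarrow> ('a, 'i, 'p) nmodel" where
  "discrete_model X = \<lparr>pts = X, nbhd = (\<lambda>x. {A. x \<in> A \<and> A \<subseteq> X}), idx = trivial_ispace,
     val = (\<lambda>_. {})\<rparr>"

lemma trivial_ispace_simps [simp]:
  "ipts trivial_ispace = {undefined}" "inbhd trivial_ispace = (\<lambda>_. {{undefined}})"
  "ile trivial_ispace = (\<lambda>_ _. True)" "izero trivial_ispace = undefined"
  by (simp_all add: trivial_ispace_def)

lemma discrete_model_simps [simp]: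
  "pts (discrete_model X) = X" "nbhd (discrete_model X) = (\<lambda>x. {A. x \<in> A \<and> A \<subseteq> X})"
  "idx (discrete_model X) = trivial_ispace" "val (discrete_model X) = (\<lambda>_. {})"
  by (simp_all add: discrete_model_def)

lemma nspace_discrete: "nspace X (\<lambda>x. {A. x \<in> A \<and> A \<subseteq> X})"
  unfolding nspace_def by auto

lemma nclosure_discrete: "nclosure X (\<lambda>x. {A. x \<in> A \<and> A \<subseteq> X}) S = S \<inter> X"
  unfolding nclosure_def by blast

lemma nconnected_singleton:
  assumes "nspace {u} N"
  shows "nconnected {u} N"
  unfolding nconnected_def nconnected_set_def semi_separated_def
proof (intro notI, elim exE conjE)
  fix U V assume "U \<noteq> {}" "V \<noteq> {}" "U \<union> V = {u}" "nclosure {u} N U \<inter> V = {}"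
  moreover from this have "U = {u}" "V = {u}"
    by (metis Un_empty subset_singleton_iff sup_ge1 sup_ge2)+
  moreover from calculation have "U \<subseteq> nclosure {u} N U"
    by (intro nclosure_subset[OF assms]) simp
  ultimately show False
    by blast
qed

lemma not_nconnected_discrete:
  assumes "a \<in> X" "b \<in> X" "a \<noteq> b"
  shows "\<not> nconnected X (\<lambda>x. {A. x \<in> A \<and> A \<subseteq> X})"
proof -
  have "semi_separated X (\<lambda>x. {A. x \<in> A \<and> A \<subseteq> X}) {a} (X - {a})"
    unfolding semi_separated_def nclosure_discrete by blast
  moreover have "{a} \<noteq> {}" "X - {a} \<noteq> {}" "{a} \<union> (X - {a}) = X"
    using assms by auto
  ultimately show ?thesis
    unfolding nconnected_def nconnected_set_def by blast
qed

lemma index_space_trivial: "index_space trivial_ispace"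
proof -
  have "nspace {undefined} (\<lambda>_. {{undefined}})"
    unfolding nspace_def by auto
  moreover from this have "nconnected {undefined} (\<lambda>_. {{undefined}})"
    by (rule nconnected_singleton)
  ultimately show ?thesis
    unfolding index_space_def by simp
qed

lemma nmodel_discrete_model: "nmodel (discrete_model X)"
  unfolding nmodel_def by (simp add: nspace_discrete index_space_trivial)

lemma is_path_discrete_model_const: "x \<in> X \<Longrightarrow> is_path (discrete_model X) (\<lambda>_. x)"
  unfolding is_path_def ncontinuous_def by auto

primrec discrete_truth :: "'p slcs \<Rightarrow> bool" where
  "discrete_truth (Atom a) = False"
| "discrete_truth Top = True"
| "discrete_truth (Neg \<phi>) = (\<not> discrete_truth \<phi>)"
| "discrete_truth (Conj \<phi> \<psi>) = (discrete_truth \<phi> \<and> discrete_truth \<psi>)"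
| "discrete_truth (Near \<phi>) = discrete_truth \<phi>"
| "discrete_truth (Reach \<phi> \<psi>) = discrete_truth \<psi>"
| "discrete_truth (Pass \<phi> \<psi>) = discrete_truth \<psi>"

lemma sat_discrete_model:
  assumes "x \<in> X"
  shows "sat (discrete_model X :: ('a, 'i, 'p) nmodel) x \<phi> \<longleftrightarrow> discrete_truth \<phi>"
  using assms
proof (induction \<phi> arbitrary: x)
  case (Near \<phi>)
  then have "{y \<in> X. sat (discrete_model X :: ('a, 'i, 'p) nmodel) y \<phi>} = {y \<in> X. discrete_truth \<phi>}"
    by blast
  with Near.prems show ?case
    by (simp add: nclosure_discrete)
next
  case (Reach \<phi> \<psi>)
  then show ?case
    using is_path_discrete_model_const[OF Reach.prems]
    by (auto simp: ilt_def intro!: exI[of _ "\<lambda>_. x"])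
next
  case (Pass \<phi> \<psi>)
  then show ?case
    using is_path_discrete_model_const[OF Pass.prems]
    by (auto simp: ilt_def intro!: exI[of _ "\<lambda>_. x"])
qed simp_all

lemma connectedness_not_slcs_definable:
  assumes "\<exists>a b :: 'a. a \<noteq> b"
  shows "\<not> (\<exists>\<phi> :: 'p slcs. \<forall>M :: ('a, 'i, 'p) nmodel.
            nmodel M \<longrightarrow> (nconnected (pts M) (nbhd M) \<longleftrightarrow> (\<forall>x\<in>pts M. sat M x \<phi>)))"
proof
  assume "\<exists>\<phi> :: 'p slcs. \<forall>M :: ('a, 'i, 'p) nmodel.
            nmodel M \<longrightarrow> (nconnected (pts M) (nbhd M) \<longleftrightarrow> (\<forall>x\<in>pts M. sat M x \<phi>))"
  then obtain \<phi> :: "'p slcs" where "\<forall>M :: ('a, 'i, 'p) nmodel.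
            nmodel M \<longrightarrow> (nconnected (pts M) (nbhd M) \<longleftrightarrow> (\<forall>x\<in>pts M. sat M x \<phi>))"
    by blast
  then have characterises: "nconnected X (\<lambda>x. {A. x \<in> A \<and> A \<subseteq> X}) \<longleftrightarrow> discrete_truth \<phi>"
    if "X \<noteq> {}" for X :: "'a set"
    using nmodel_discrete_model[of X] sat_discrete_model[of _ X] that by fastforce
  obtain a b :: 'a where "a \<noteq> b"
    using assms by blast
  then have "nconnected {a, b} (\<lambda>x. {A. x \<in> A \<and> A \<subseteq> {a, b}}) \<longleftrightarrow>
      nconnected {a} (\<lambda>x. {A. x \<in> A \<and> A \<subseteq> {a}})"
    using characterises by simp
  moreover have "nconnected {a} (\<lambda>x. {A. x \<in> A \<and> A \<subseteq> {a}})"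
    by (rule nconnected_singleton[OF nspace_discrete])
  moreover have "\<not> nconnected {a, b} (\<lambda>x. {A. x \<in> A \<and> A \<subseteq> {a, b}})"
    using \<open>a \<noteq> b\<close> by (intro not_nconnected_discrete) simp_all
  ultimately show False
    by blast
qed

theorem proposition21:
  fixes dummy :: "'a itself" and dummy_i :: "'i itself" and dummy_p :: "'p::countable itself"
  assumes "\<exists>a b :: 'a. a \<noteq> b"
  shows "\<not> (\<exists>\<phi> :: 'p slcs. \<forall>M :: ('a, 'i, 'p) nmodel.
            nmodel M \<longrightarrow> (nconnected (pts M) (nbhd M) \<longleftrightarrow> (\<forall>x\<in>pts M. sat M x \<phi>)))
       \<and> (\<forall>M :: ('a, 'i, 'p) nmodel. nmodel M \<and> pts M \<noteq> {} \<longrightarrow>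
            nmodel (two_copies M) \<and>
            (\<exists>Z1 Z2. pp_bisim M (two_copies M) {(x, (x, b)) | x b. x \<in> pts M} Z1 Z2))"
  using connectedness_not_slcs_definable[OF assms] nmodel_two_copies two_copies_pp_bisim
  by (intro conjI allI impI) (assumption | blast)+

end
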